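(* Let $\{S_0,S_1,\dots,S_m\}$ be an admissible cover of $S=S_{p,q}$. Then for every $\ell\in\{0,1,\dots,m\}$, either $\mathbb V_{\mathbb F}\big(\bigcup_{i=0}^{\ell-1}S_i\big)=\varnothing$, or for every $\mathbf s\in \mathbb V_{\mathbb F}\big(\bigcup_{i=0}^{\ell-1}S_i\big)$ we have $$\mathbb V_{\mathbb F}\Big(\bigcup_{i=0}^{\ell}S_i\Big)=\mathbb V_{\mathbb F}\Big(\bigcup_{i=0}^{\ell}L_{\mathbf a=\mathbf s}(S_i)\Big).$$ (For $\ell=0$ the union $\bigcup_{i=0}^{-1}S_i$ is empty and its zero set is $\mathbb F^n$.)
   Context: Let $\mathbb F$ be a field of characteristic zero, $\mathbf x=(x_1,\dots,x_n)$ variables and $\mathbf a=(a_1,\dots,a_n)$ new indeterminates. For $p,q\in\mathbb F[\mathbf x]$ write $p(\mathbf x+\mathbf a)-q(\mathbf x)=\sum_{\alpha\in\mathbb N^n}c_\alpha(\mathbf a)\mathbf x^\alpha$ with $c_\alpha(\mathbf a)\in\mathbb F[\mathbf a]$, and let $S=S_{p,q}$ be the family of nonzero coefficients $c_\alpha(\mathbf a)$ (indexed by $\alpha$ with $\mathbf x^\alpha$ in the support of $p(\mathbf x+\mathbf a)-q(\mathbf x)$). On $\mathbb N^n$, $\beta\ge\alpha$ means $\beta_i\ge\alpha_i$ for all $i$, and $\beta>\alpha$ means $\beta\ge\alpha$, $\beta\neq\alpha$. A cover of $S$ is a collection $\{S_0,\dots,S_m\}$ of subsets whose union is $S$. It is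 admissible if (1) every polynomial in $S_0$ has total degree at most one in $\mathbf a$; and (2) for every $\ell=1,\dots,m$, if $c_\alpha\in S_\ell$ then $c_\beta\in\bigcup_{i=0}^{\ell-1}S_i$ for all $\beta>\alpha$ with $c_\beta\neq 0$. For $f\in\mathbb F[\mathbf a]$ let $f=\sum_{i\ge0}H^i(f)$ be its decomposition into homogeneous components in $\mathbf a$ ($H^i(f)$ homogeneous of degree $i$). For $\mathbf s\in\mathbb F^n$, the linearization of $f$ at $\mathbf s$ is $L_{\mathbf a=\mathbf s}(f)=H^0(f)+H^1(f)(\mathbf a)+\sum_{i\ge2}H^i(f)(\mathbf s)$, and for a set $P$ of polynomials $L_{\mathbf a=\mathbf s}(P)=\{L_{\mathbf a=\mathbf s}(f):f\in P\}$. For $P\subseteq\mathbb F[\mathbf a]$, $\mathbb V_{\mathbb F}(P)=\{\mathbf v\in\mathbb F^n: f(\mathbf v)=0\ \forall f\in P\}$. *)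

theory Defs
  imports Main "HOL-Library.Poly_Mapping" "HOL-Library.Function_Algebras"
begin

text \<open>Multivariate polynomials over a field 'a in variables indexed by a finite type 'v:
  a polynomial is a finitely supported map from exponent vectors ('v \<Rightarrow> nat) to
  coefficients.  The pointwise order on exponent vectors is the order on functions.\<close>

type_synonym ('v, 'a) mpoly = "('v \<Rightarrow> nat) \<Rightarrow>\<^sub>0 'a"

definition mp_const :: "'a::zero \<Rightarrow> ('v, 'a) mpoly" where
  "mp_const c = Poly_Mapping.single 0 c"

definition mp_var :: "'v \<Rightarrow> ('v, 'a::{zero,one}) mpoly" where
  "mp_var i = Poly_Mapping.single (\<lambda>j. if j = i then 1 else 0) 1"

definition mon_eval :: "('v::finite \<Rightarrow> 'a::comm_semiring_1) \<Rightarrow> ('v \<Rightarrow> nat) \<Rightarrow> 'a" where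
  "mon_eval v \<alpha> = (\<Prod>i\<in>UNIV. v i ^ \<alpha> i)"

definition mp_eval :: "('v::finite, 'a::comm_semiring_1) mpoly \<Rightarrow> ('v \<Rightarrow> 'a) \<Rightarrow> 'a" where
  "mp_eval f v = (\<Sum>\<alpha>\<in>Poly_Mapping.keys f. Poly_Mapping.lookup f \<alpha> * mon_eval v \<alpha>)"

text \<open>Total degree of a monomial / of a polynomial (the zero polynomial gets degree 0).\<close>
definition mon_deg :: "('v::finite \<Rightarrow> nat) \<Rightarrow> nat" where
  "mon_deg \<alpha> = (\<Sum>i\<in>UNIV. \<alpha> i)"

definition mp_deg :: "('v::finite, 'a::zero) mpoly \<Rightarrow> nat" where
  "mp_deg f = Max (insert 0 (mon_deg ` Poly_Mapping.keys f))"

definition hom_comp :: "nat \<Rightarrow> ('v::finite, 'a::comm_monoid_add) mpoly \<Rightarrow> ('v, 'a) mpoly" where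
  "hom_comp k f = (\<Sum>\<alpha>\<in>{\<alpha>\<in>Poly_Mapping.keys f. mon_deg \<alpha> = k}. Poly_Mapping.single \<alpha> (Poly_Mapping.lookup f \<alpha>))"

definition linearize :: "('v::finite \<Rightarrow> 'a::comm_semiring_1) \<Rightarrow> ('v, 'a) mpoly \<Rightarrow> ('v, 'a) mpoly" where
  "linearize s f = hom_comp 0 f + hom_comp 1 f
     + (\<Sum>i\<in>{2..mp_deg f}. mp_const (mp_eval (hom_comp i f) s))"

definition zero_set :: "('v::finite, 'a::comm_semiring_1) mpoly set \<Rightarrow> ('v \<Rightarrow> 'a) set" where
  "zero_set P = {v. \<forall>f\<in>P. mp_eval f v = 0}"

text \<open>p(x + a) as a polynomial in the 2n variables x (Inl) and a (Inr),
  obtained by substituting x_i + a_i for x_i in p.\<close>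
definition shifted :: "('v::finite, 'a::comm_ring_1) mpoly \<Rightarrow> ('v + 'v, 'a) mpoly" where
  "shifted p = (\<Sum>\<beta>\<in>Poly_Mapping.keys p. mp_const (Poly_Mapping.lookup p \<beta>)
       * (\<Prod>i\<in>UNIV. (mp_var (Inl i) + mp_var (Inr i)) ^ \<beta> i))"

text \<open>The coefficient c_\<alpha>(a) \<in> F[a] of x^\<alpha> in p(x+a) - q(x).\<close>
definition shift_coeff :: "('v::finite, 'a::comm_ring_1) mpoly \<Rightarrow> ('v, 'a) mpoly
     \<Rightarrow> ('v \<Rightarrow> nat) \<Rightarrow> ('v, 'a) mpoly" where
  "shift_coeff p q \<alpha> =
     (\<Sum>\<gamma>\<in>{\<gamma>\<in>Poly_Mapping.keys (shifted p). (\<lambda>i. \<gamma> (Inl i)) = \<alpha>}.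
         Poly_Mapping.single (\<lambda>i. \<gamma> (Inr i)) (Poly_Mapping.lookup (shifted p) \<gamma>))
     - mp_const (Poly_Mapping.lookup q \<alpha>)"

definition supp_S :: "('v::finite, 'a::comm_ring_1) mpoly \<Rightarrow> ('v, 'a) mpoly \<Rightarrow> ('v \<Rightarrow> nat) set" where
  "supp_S p q = {\<alpha>. shift_coeff p q \<alpha> \<noteq> 0}"

text \<open>Admissible cover, given by index sets C 0, ..., C m (C l \<subseteq> supp_S p q stands
  for the subfamily S_l = {c_\<alpha> : \<alpha> \<in> C l}).\<close>
definition admissible_cover :: "('v::finite, 'a::comm_ring_1) mpoly \<Rightarrow> ('v, 'a) mpoly
     \<Rightarrow> nat \<Rightarrow> (nat \<Rightarrow> ('v \<Rightarrow> nat) set) \<Rightarrow> bool" where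
  "admissible_cover p q m C \<longleftrightarrow>
     (\<Union>i\<in>{0..m}. C i) = supp_S p q \<and>
     (\<forall>\<alpha>\<in>C 0. mp_deg (shift_coeff p q \<alpha>) \<le> 1) \<and>
     (\<forall>l\<in>{1..m}. \<forall>\<alpha>\<in>C l. \<forall>\<beta>. \<beta> > \<alpha> \<and> shift_coeff p q \<beta> \<noteq> 0
         \<longrightarrow> \<beta> \<in> (\<Union>i\<in>{0..<l}. C i))"

end

theory Submission
  imports Defs "HOL-Library.FuncSet" "HOL-Computational_Algebra.Polynomial"
begin

text \<open>
  Write c_\<alpha>(a) = P_\<alpha>(a) - q_\<alpha>, where P_\<alpha>(a) is the coefficient of x^\<alpha> in p(x + a), and use Taylor's
  formula P_\<alpha>(a + b) = \<Sum>_\<gamma> binom(\<alpha> + \<gamma>, \<alpha>) P_{\<alpha>+\<gamma>}(a) b^\<gamma>. By induction on \<ell>, the zero set of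
  S_0 \<union> ... \<union> S_{\<ell>-1} is the affine space through s cut out by the linear parts of its members.
  For c_\<alpha> in S_\<ell> and v in this space, admissibility puts every nonzero c_\<beta> with \<beta> > \<alpha> into an earlier
  S_i, so c_\<beta> vanishes on the line through s and v. Taylor's formula then makes
  t \<mapsto> P_\<alpha>(s + t(v - s)) - P_\<alpha>(s) an additive polynomial function, hence linear in characteristic
  zero, with slope the derivative of P_\<alpha> at s in direction v - s. Expanding this derivative around 0
  and using H^1(c_\<beta>)(v - s) = 0 for \<beta> > \<alpha> shows that the slope is H^1(c_\<alpha>)(v - s). Hence
  c_\<alpha>(v) = c_\<alpha>(s) + H^1(c_\<alpha>)(v - s) = L_{a=s}(c_\<alpha>)(v).
\<close>

section \<open>Evaluation and homogeneous components\<close>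

lemma single_power:
  "Poly_Mapping.single \<alpha> (c::'a::comm_semiring_1) ^ k = Poly_Mapping.single (\<lambda>i. k * \<alpha> i) (c ^ k)"
proof (induction k)
  case 0
  have "(\<lambda>i. 0 * \<alpha> i) = 0" by (simp add: fun_eq_iff)
  then show ?case by simp
next
  case (Suc k)
  have "\<alpha> + (\<lambda>i. k * \<alpha> i) = (\<lambda>i. Suc k * \<alpha> i)" by (simp add: fun_eq_iff)
  then show ?case by (simp add: Suc mult_single)
qed

lemma prod_single:
  "finite A \<Longrightarrow> (\<Prod>i\<in>A. Poly_Mapping.single (\<alpha> i) (c i :: 'a::comm_semiring_1))
     = Poly_Mapping.single (\<Sum>i\<in>A. \<alpha> i) (\<Prod>i\<in>A. c i)"
  by (induction A rule: finite_induct) (auto simp: mult_single)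

lemma mp_eval_superset:
  assumes "finite K" and "Poly_Mapping.keys f \<subseteq> K"
  shows "mp_eval f v = (\<Sum>\<alpha>\<in>K. Poly_Mapping.lookup f \<alpha> * mon_eval v \<alpha>)"
  unfolding mp_eval_def using assms by (intro sum.mono_neutral_left) (auto simp: in_keys_iff)

lemma mp_eval_zero [simp]: "mp_eval 0 v = 0"
  by (simp add: mp_eval_def)

lemma mp_eval_const [simp]: "mp_eval (mp_const c) v = c"
  by (subst mp_eval_superset[of "{0}"]) (auto simp: mp_const_def mon_eval_def)

lemma mp_eval_add: "mp_eval (f + g) v = mp_eval f v + mp_eval g v"
proof -
  let ?K = "Poly_Mapping.keys f \<union> Poly_Mapping.keys g"
  have "mp_eval (f + g) v = (\<Sum>\<alpha>\<in>?K. Poly_Mapping.lookup (f + g) \<alpha> * mon_eval v \<alpha>)"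
    by (rule mp_eval_superset) (simp_all add: keys_add)
  also have "\<dots> = (\<Sum>\<alpha>\<in>?K. Poly_Mapping.lookup f \<alpha> * mon_eval v \<alpha>)
      + (\<Sum>\<alpha>\<in>?K. Poly_Mapping.lookup g \<alpha> * mon_eval v \<alpha>)"
    by (simp add: lookup_add distrib_right sum.distrib)
  also have "\<dots> = mp_eval f v + mp_eval g v"
    by (subst (1 2) mp_eval_superset[of ?K]) auto
  finally show ?thesis .
qed

lemma mp_eval_sum: "finite A \<Longrightarrow> mp_eval (\<Sum>i\<in>A. f i) v = (\<Sum>i\<in>A. mp_eval (f i) v)"
  by (induction A rule: finite_induct) (auto simp: mp_eval_add)

lemma mon_eval_0 [simp]: "mon_eval v 0 = 1"
  by (simp add: mon_eval_def)

lemma mon_eval_at_0: "mon_eval 0 \<delta> = (if \<delta> = 0 then 1 else 0)"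
proof (cases "\<delta> = 0")
  case False
  then obtain i where "\<delta> i \<noteq> 0" by (auto simp: fun_eq_iff)
  then show ?thesis
    using False by (auto simp: mon_eval_def power_0_left intro!: prod_zero bexI[of _ i])
qed simp

lemma mon_deg_0_iff: "mon_deg \<alpha> = 0 \<longleftrightarrow> \<alpha> = 0"
  by (auto simp: mon_deg_def fun_eq_iff)

lemma mon_deg_zero [simp]: "mon_deg 0 = 0"
  by (simp add: mon_deg_0_iff)

lemma mon_eval_scale: "mon_eval (\<lambda>i. t * w i) \<delta> = t ^ mon_deg \<delta> * mon_eval w \<delta>"
  by (simp add: mon_eval_def mon_deg_def power_mult_distrib prod.distrib power_sum)

lemma mon_deg_1_iff: "mon_deg \<delta> = 1 \<longleftrightarrow> (\<exists>i. \<delta> = (\<lambda>j. if j = i then 1 else 0))"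
proof
  assume deg: "mon_deg \<delta> = 1"
  then obtain i where i: "\<delta> i \<noteq> 0"
    using mon_deg_0_iff[of \<delta>] by (auto simp: fun_eq_iff)
  have "\<delta> i + (\<Sum>j\<in>UNIV - {i}. \<delta> j) = 1"
    using deg by (simp add: mon_deg_def sum.remove[of UNIV i])
  then have "\<delta> i = 1" "(\<Sum>j\<in>UNIV - {i}. \<delta> j) = 0"
    using i by linarith+
  then have "\<delta> i = 1" "\<forall>j\<in>UNIV - {i}. \<delta> j = 0"
    by simp_all
  then show "\<exists>i. \<delta> = (\<lambda>j. if j = i then 1 else 0)"
    by (auto simp: fun_eq_iff)
qed (auto simp: mon_deg_def if_distrib cong: if_cong)

lemma mon_eval_unit: "mon_eval v (\<lambda>j. if j = i then 1 else 0) = v i"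
  by (simp add: mon_eval_def if_distrib[of "\<lambda>n. _ ^ n"] cong: if_cong)

lemma mon_eval_diff_deg_1:
  "mon_deg \<delta> = 1 \<Longrightarrow> mon_eval (v - w) \<delta> = mon_eval v \<delta> - mon_eval (w :: 'v::finite \<Rightarrow> 'a::comm_ring_1) \<delta>"
  by (auto simp: mon_deg_1_iff mon_eval_unit simp del: One_nat_def)

lemma zero_set_union: "zero_set (A \<union> B) = zero_set A \<inter> zero_set B"
  by (auto simp: zero_set_def)

lemma mem_zero_set_image: "v \<in> zero_set (f ` A) \<longleftrightarrow> (\<forall>\<alpha>\<in>A. mp_eval (f \<alpha>) v = 0)"
  by (simp add: zero_set_def)

lemma lookup_hom_comp:
  "Poly_Mapping.lookup (hom_comp k f) \<alpha> = (if mon_deg \<alpha> = k then Poly_Mapping.lookup f \<alpha> else 0)"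
proof -
  have "Poly_Mapping.lookup (hom_comp k f) \<alpha>
      = (\<Sum>\<beta>\<in>{\<beta> \<in> Poly_Mapping.keys f. mon_deg \<beta> = k}. if \<beta> = \<alpha> then Poly_Mapping.lookup f \<beta> else 0)"
    unfolding hom_comp_def lookup_sum by (rule sum.cong) (auto simp: lookup_single when_def)
  then show ?thesis
    by (auto simp: sum.delta' in_keys_iff)
qed

lemma keys_hom_comp: "Poly_Mapping.keys (hom_comp k f) \<subseteq> {\<alpha> \<in> Poly_Mapping.keys f. mon_deg \<alpha> = k}"
  by (auto simp: in_keys_iff lookup_hom_comp split: if_splits)

lemma mp_eval_hom_comp:
  "mp_eval (hom_comp k f) v
     = (\<Sum>\<alpha>\<in>{\<alpha> \<in> Poly_Mapping.keys f. mon_deg \<alpha> = k}. Poly_Mapping.lookup f \<alpha> * mon_eval v \<alpha>)"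
  by (subst mp_eval_superset[OF _ keys_hom_comp]) (auto simp: lookup_hom_comp intro!: sum.cong)

lemma mp_eval_sum_hom_comp:
  assumes "finite T" and "mon_deg ` Poly_Mapping.keys f \<subseteq> T"
  shows "mp_eval f v = (\<Sum>k\<in>T. mp_eval (hom_comp k f) v)"
  unfolding mp_eval_hom_comp unfolding mp_eval_def using assms by (intro sum.group[symmetric]) auto

lemma mp_eval_hom_comp_0: "mp_eval (hom_comp 0 f) v = mp_eval (hom_comp 0 f) w"
  by (simp add: mp_eval_hom_comp mon_deg_0_iff cong: conj_cong)

lemma mp_eval_hom_comp_scale:
  "mp_eval (hom_comp k f) (\<lambda>i. t * w i) = t ^ k * mp_eval (hom_comp k f) w"
  by (simp add: mp_eval_hom_comp mon_eval_scale sum_distrib_left algebra_simps)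

lemma mp_eval_hom_comp_1_diff:
  "mp_eval (hom_comp 1 f) (v - w) = mp_eval (hom_comp 1 f) v - mp_eval (hom_comp 1 (f :: ('v::finite, 'a::comm_ring_1) mpoly)) w"
  by (simp add: mp_eval_hom_comp mon_eval_diff_deg_1 right_diff_distrib sum_subtractf)

lemma mon_deg_le_mp_deg: "\<alpha> \<in> Poly_Mapping.keys f \<Longrightarrow> mon_deg \<alpha> \<le> mp_deg f"
  unfolding mp_deg_def by (rule Max_ge) auto

lemma mp_eval_linearize:
  "mp_eval (linearize s f) v = mp_eval f s + mp_eval (hom_comp 1 f) (v - s)"
  for f :: "('v::finite, 'a::comm_ring_1) mpoly"
proof -
  define d where "d = mp_deg f"
  have "mp_eval f s = (\<Sum>k\<in>{0, 1} \<union> {2..d}. mp_eval (hom_comp k f) s)"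
    by (rule mp_eval_sum_hom_comp) (auto simp: d_def dest: mon_deg_le_mp_deg)
  also have "\<dots> = mp_eval (hom_comp 0 f) s + mp_eval (hom_comp 1 f) s
      + (\<Sum>k\<in>{2..d}. mp_eval (hom_comp k f) s)"
    by (subst sum.union_disjoint) auto
  finally show ?thesis
    unfolding linearize_def d_def[symmetric] mp_eval_hom_comp_1_diff
    by (simp add: mp_eval_add mp_eval_sum mp_eval_hom_comp_0[of f v s])
qed

lemma mp_eval_deg_le_1:
  fixes f :: "('v::finite, 'a::comm_ring_1) mpoly"
  assumes "mp_deg f \<le> 1"
  shows "mp_eval f v = mp_eval f s + mp_eval (hom_comp 1 f) (v - s)"
proof -
  have "mp_eval f x = mp_eval (hom_comp 0 f) x + mp_eval (hom_comp 1 f) x" for x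
    using mp_eval_sum_hom_comp[of "{0, 1}" f x] assms by (fastforce dest: mon_deg_le_mp_deg)
  then show ?thesis
    unfolding mp_eval_hom_comp_1_diff by (simp add: mp_eval_hom_comp_0[of f v s])
qed

section \<open>The coefficients of p(x + a) - q(x)\<close>

definition multi_choose :: "('v::finite \<Rightarrow> nat) \<Rightarrow> ('v \<Rightarrow> nat) \<Rightarrow> nat" where
  "multi_choose \<mu> \<alpha> = (\<Prod>i\<in>UNIV. \<mu> i choose \<alpha> i)"

lemma multi_choose_self [simp]: "multi_choose \<alpha> \<alpha> = 1"
  by (simp add: multi_choose_def)

lemma multi_choose_mult:
  assumes "\<gamma> \<le> \<delta>"
  shows "multi_choose (\<alpha> + \<delta>) \<alpha> * multi_choose \<delta> \<gamma>
    = multi_choose (\<alpha> + \<gamma>) \<alpha> * multi_choose (\<alpha> + \<delta>) (\<alpha> + \<gamma>)"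
proof -
  have "(\<alpha> i + \<delta> i choose \<alpha> i) * (\<delta> i choose \<gamma> i)
      = (\<alpha> i + \<gamma> i choose \<alpha> i) * (\<alpha> i + \<delta> i choose (\<alpha> i + \<gamma> i))" for i
  proof -
    have "\<gamma> i \<le> \<delta> i"
      using assms by (simp add: le_fun_def)
    then have "(\<alpha> i + \<delta> i choose (\<alpha> i + \<gamma> i)) * (\<alpha> i + \<gamma> i choose \<alpha> i)
        = (\<alpha> i + \<delta> i choose \<alpha> i) * (\<delta> i choose \<gamma> i)"
      using choose_mult[of "\<alpha> i" "\<alpha> i + \<gamma> i" "\<alpha> i + \<delta> i"] by simp
    then show ?thesis
      by (simp only: ac_simps)
  qed
  then show ?thesis
    by (simp add: multi_choose_def prod.distrib[symmetric])
qed

lemma multi_choose_swap: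
  "multi_choose (\<alpha> + \<gamma>) \<alpha> * multi_choose (\<alpha> + \<gamma> + \<eta>) (\<alpha> + \<gamma>)
    = multi_choose (\<alpha> + \<eta>) \<alpha> * multi_choose (\<alpha> + \<eta> + \<gamma>) (\<alpha> + \<eta>)"
proof -
  have le: "\<gamma> \<le> \<gamma> + \<eta>" "\<eta> \<le> \<gamma> + \<eta>"
    by (simp_all add: le_fun_def)
  have "multi_choose (\<gamma> + \<eta>) \<gamma> = multi_choose (\<gamma> + \<eta>) \<eta>"
    unfolding multi_choose_def
    by (intro prod.cong refl) (use binomial_symmetric[of "\<gamma> _" "\<gamma> _ + \<eta> _"] in simp)
  then have "multi_choose (\<alpha> + \<gamma>) \<alpha> * multi_choose (\<alpha> + (\<gamma> + \<eta>)) (\<alpha> + \<gamma>)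
      = multi_choose (\<alpha> + \<eta>) \<alpha> * multi_choose (\<alpha> + (\<gamma> + \<eta>)) (\<alpha> + \<eta>)"
    using multi_choose_mult[OF le(1), of \<alpha>] multi_choose_mult[OF le(2), of \<alpha>] by simp
  moreover have "\<alpha> + \<gamma> + \<eta> = \<alpha> + (\<gamma> + \<eta>)" "\<alpha> + \<eta> + \<gamma> = \<alpha> + (\<gamma> + \<eta>)"
    by (simp_all add: ac_simps)
  ultimately show ?thesis
    by simp
qed

lemma PiE_atMost_eq: "PiE UNIV (\<lambda>i. {..\<beta> i}) = {\<kappa>. \<kappa> \<le> (\<beta> :: 'v \<Rightarrow> nat)}"
  by (auto simp: PiE_def Pi_def le_fun_def)

lemma finite_le_fun: "finite {\<kappa>. \<kappa> \<le> (\<beta> :: 'v::finite \<Rightarrow> nat)}"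
  unfolding PiE_atMost_eq[symmetric] by (rule finite_PiE) auto

lemma sum_fun_apply: "finite A \<Longrightarrow> (\<Sum>i\<in>A. f i) x = (\<Sum>i\<in>A. f i x :: 'b::comm_monoid_add)"
  by (induction A rule: finite_induct) auto

lemma power_var_sum:
  "(mp_var (Inl i) + mp_var (Inr i) :: ('v + 'v, 'a::comm_semiring_1) mpoly) ^ n
     = (\<Sum>k\<le>n. Poly_Mapping.single
          (case_sum (\<lambda>j. if j = i then k else 0) (\<lambda>j. if j = i then n - k else 0)) (of_nat (n choose k)))"
proof -
  have "(of_nat c :: ('v + 'v, 'a) mpoly) * mp_var (Inl i) ^ k * mp_var (Inr i) ^ (n - k)
      = Poly_Mapping.single (case_sum (\<lambda>j. if j = i then k else 0) (\<lambda>j. if j = i then n - k else 0)) (of_nat c)"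
    for c k
  proof -
    have "0 + (\<lambda>z. k * (if z = Inl i then 1 else 0)) + (\<lambda>z. (n - k) * (if z = Inr i then 1 else 0))
        = case_sum (\<lambda>j. if j = i then k else 0) (\<lambda>j. if j = i then n - k else 0)"
      by (auto simp: fun_eq_iff split: sum.split)
    then show ?thesis
      by (simp add: mp_var_def single_power mult_single flip: single_of_nat)
  qed
  then show ?thesis
    by (simp add: binomial_ring)
qed

lemma prod_power_var_sum:
  "(\<Prod>i\<in>UNIV. (mp_var (Inl i) + mp_var (Inr i) :: ('v::finite + 'v, 'a::comm_semiring_1) mpoly) ^ \<beta> i)
     = (\<Sum>\<kappa>\<in>{\<kappa>. \<kappa> \<le> \<beta>}. Poly_Mapping.single (case_sum \<kappa> (\<beta> - \<kappa>)) (of_nat (multi_choose \<beta> \<kappa>)))"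
proof -
  have exp: "(\<Sum>i\<in>UNIV. case_sum (\<lambda>j. if j = i then \<kappa> i else 0) (\<lambda>j. if j = i then \<beta> i - \<kappa> i else 0))
      = case_sum \<kappa> (\<beta> - \<kappa>)" for \<kappa>
    by (rule ext) (simp add: sum_fun_apply split: sum.split)
  have "(\<Prod>i\<in>UNIV. (mp_var (Inl i) + mp_var (Inr i) :: ('v + 'v, 'a) mpoly) ^ \<beta> i)
      = (\<Sum>\<kappa>\<in>PiE UNIV (\<lambda>i. {..\<beta> i}). \<Prod>i\<in>UNIV. Poly_Mapping.single
          (case_sum (\<lambda>j. if j = i then \<kappa> i else 0) (\<lambda>j. if j = i then \<beta> i - \<kappa> i else 0))
          (of_nat (\<beta> i choose \<kappa> i)))"
    unfolding power_var_sum by (rule prod_sum_PiE) auto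
  then show ?thesis
    by (simp add: prod_single exp multi_choose_def PiE_atMost_eq)
qed

lemma lookup_shifted:
  "Poly_Mapping.lookup (shifted p) \<gamma> = Poly_Mapping.lookup p ((\<gamma> \<circ> Inl) + (\<gamma> \<circ> Inr))
     * of_nat (multi_choose ((\<gamma> \<circ> Inl) + (\<gamma> \<circ> Inr)) (\<gamma> \<circ> Inl))"
  for p :: "('v::finite, 'a::comm_ring_1) mpoly"
proof -
  have split_eq: "case_sum \<kappa> (\<beta> - \<kappa>) = \<gamma> \<longleftrightarrow> \<beta> = (\<gamma> \<circ> Inl) + (\<gamma> \<circ> Inr) \<and> \<kappa> = \<gamma> \<circ> Inl"
    if "\<kappa> \<le> \<beta>" for \<beta> \<kappa> :: "'v \<Rightarrow> nat"
  proof
    assume "case_sum \<kappa> (\<beta> - \<kappa>) = \<gamma>"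
    then have "\<gamma> \<circ> Inl = \<kappa>" "\<gamma> \<circ> Inr = \<beta> - \<kappa>"
      by auto
    then show "\<beta> = (\<gamma> \<circ> Inl) + (\<gamma> \<circ> Inr) \<and> \<kappa> = \<gamma> \<circ> Inl"
      using that by (auto simp: fun_eq_iff le_fun_def)
  next
    assume "\<beta> = (\<gamma> \<circ> Inl) + (\<gamma> \<circ> Inr) \<and> \<kappa> = \<gamma> \<circ> Inl"
    then show "case_sum \<kappa> (\<beta> - \<kappa>) = \<gamma>"
      by (auto simp: fun_eq_iff split: sum.split)
  qed
  let ?\<beta> = "(\<gamma> \<circ> Inl) + (\<gamma> \<circ> Inr)"
  have inner: "Poly_Mapping.lookup (\<Sum>\<kappa>\<in>{\<kappa>. \<kappa> \<le> \<beta>}.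
        Poly_Mapping.single (case_sum \<kappa> (\<beta> - \<kappa>)) (c * of_nat (multi_choose \<beta> \<kappa>))) \<gamma>
      = (if \<beta> = ?\<beta> then c * of_nat (multi_choose \<beta> (\<gamma> \<circ> Inl)) else 0)" for \<beta> c
  proof -
    have "Poly_Mapping.lookup (\<Sum>\<kappa>\<in>{\<kappa>. \<kappa> \<le> \<beta>}.
          Poly_Mapping.single (case_sum \<kappa> (\<beta> - \<kappa>)) (c * of_nat (multi_choose \<beta> \<kappa>))) \<gamma>
        = (\<Sum>\<kappa>\<in>{\<kappa>. \<kappa> \<le> \<beta>}. if \<beta> = ?\<beta> \<and> \<kappa> = \<gamma> \<circ> Inl then c * of_nat (multi_choose \<beta> \<kappa>) else 0)"
      unfolding lookup_sum by (intro sum.cong refl) (simp add: lookup_single when_def split_eq)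
    moreover have "\<gamma> \<circ> Inl \<le> ?\<beta>"
      by (simp add: le_fun_def)
    ultimately show ?thesis
      by (simp add: finite_le_fun if_distrib[of "\<lambda>x. x = _"] cong: if_cong)
  qed
  have "shifted p = (\<Sum>\<beta>\<in>Poly_Mapping.keys p. \<Sum>\<kappa>\<in>{\<kappa>. \<kappa> \<le> \<beta>}.
      Poly_Mapping.single (case_sum \<kappa> (\<beta> - \<kappa>)) (Poly_Mapping.lookup p \<beta> * of_nat (multi_choose \<beta> \<kappa>)))"
    unfolding shifted_def prod_power_var_sum mp_const_def by (simp add: sum_distrib_left mult_single)
  then have "Poly_Mapping.lookup (shifted p) \<gamma> = (\<Sum>\<beta>\<in>Poly_Mapping.keys p.
      if \<beta> = ?\<beta> then Poly_Mapping.lookup p \<beta> * of_nat (multi_choose \<beta> (\<gamma> \<circ> Inl)) else 0)"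
    by (simp only: lookup_sum[where X = "Poly_Mapping.keys p"] inner)
  then show ?thesis
    by (simp add: sum.delta' in_keys_iff)
qed

lemma lookup_shift_coeff:
  "Poly_Mapping.lookup (shift_coeff p q \<alpha>) \<delta>
     = of_nat (multi_choose (\<alpha> + \<delta>) \<alpha>) * Poly_Mapping.lookup p (\<alpha> + \<delta>)
       - (if \<delta> = 0 then Poly_Mapping.lookup q \<alpha> else 0)"
  for p q :: "('v::finite, 'a::comm_ring_1) mpoly"
proof -
  define S where "S = {\<gamma> \<in> Poly_Mapping.keys (shifted p). (\<lambda>i. \<gamma> (Inl i)) = \<alpha>}"
  have fin: "finite S"
    by (simp add: S_def)
  have split_eq: "(\<lambda>i. \<gamma> (Inr i)) = \<delta> \<longleftrightarrow> \<gamma> = case_sum \<alpha> \<delta>" if "\<gamma> \<in> S" for \<gamma>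
    using that by (auto simp: S_def fun_eq_iff split: sum.split)
  have "Poly_Mapping.lookup (\<Sum>\<gamma>\<in>S. Poly_Mapping.single (\<lambda>i. \<gamma> (Inr i))
        (Poly_Mapping.lookup (shifted p) \<gamma>)) \<delta>
      = (\<Sum>\<gamma>\<in>S. if \<gamma> = case_sum \<alpha> \<delta> then Poly_Mapping.lookup (shifted p) \<gamma> else 0)"
    unfolding lookup_sum by (intro sum.cong refl) (simp add: lookup_single when_def split_eq)
  also have "\<dots> = Poly_Mapping.lookup (shifted p) (case_sum \<alpha> \<delta>)"
    using fin by (auto simp: S_def in_keys_iff)
  also have "\<dots> = of_nat (multi_choose (\<alpha> + \<delta>) \<alpha>) * Poly_Mapping.lookup p (\<alpha> + \<delta>)"
    by (simp add: lookup_shifted comp_def mult.commute plus_fun_def)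
  finally show ?thesis
    unfolding shift_coeff_def lookup_minus S_def[symmetric]
    by (simp add: mp_const_def lookup_single when_def eq_commute[of 0])
qed

section \<open>Taylor coefficients\<close>

text \<open>Sums over exp_box p stand for sums over all multi-indices: the box contains every exponent
  of p.\<close>

definition max_exp :: "('v::finite, 'a::zero) mpoly \<Rightarrow> nat" where
  "max_exp p = Max (insert 0 ((\<lambda>(\<beta>, i). \<beta> i) ` (Poly_Mapping.keys p \<times> UNIV)))"

definition exp_box :: "('v::finite, 'a::zero) mpoly \<Rightarrow> ('v \<Rightarrow> nat) set" where
  "exp_box p = {\<delta>. \<delta> \<le> (\<lambda>_. max_exp p)}"

lemma finite_exp_box [simp]: "finite (exp_box p)"
  by (simp add: exp_box_def finite_le_fun)

lemma zero_in_exp_box [simp]: "0 \<in> exp_box p"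
  by (simp add: exp_box_def le_fun_def)

lemma exp_box_down_closed: "\<delta> \<in> exp_box p \<Longrightarrow> \<gamma> \<le> \<delta> \<Longrightarrow> \<gamma> \<in> exp_box p"
  by (auto simp: exp_box_def)

lemma lookup_outside_exp_box:
  assumes "\<delta> \<notin> exp_box p"
  shows "Poly_Mapping.lookup p (\<alpha> + \<delta>) = 0"
proof -
  obtain i where i: "max_exp p < \<delta> i"
    using assms by (auto simp: exp_box_def le_fun_def not_le)
  have "\<beta> i \<le> max_exp p" if "\<beta> \<in> Poly_Mapping.keys p" for \<beta>
    unfolding max_exp_def using that by (intro Max_ge) force+
  with i show ?thesis
    by (fastforce simp: in_keys_iff)
qed

lemma keys_shift_coeff: "Poly_Mapping.keys (shift_coeff p q \<alpha>) \<subseteq> exp_box p"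
  for p q :: "('v::finite, 'a::comm_ring_1) mpoly"
  using lookup_outside_exp_box[of _ p \<alpha>] zero_in_exp_box[of p]
  by (fastforce simp: in_keys_iff lookup_shift_coeff split: if_splits)

text \<open>The coefficient of \<open>x\<^sup>\<alpha>\<close> in \<open>p(x + a)\<close>, i.e. the Taylor coefficient \<open>\<partial>\<^sup>\<alpha>p(a)/\<alpha>!\<close>,
  so that \<open>c\<^sub>\<alpha>(a) = P\<^sub>\<alpha>(a) - q\<^sub>\<alpha>\<close>.\<close>
definition taylor_coeff :: "('v::finite, 'a::comm_ring_1) mpoly \<Rightarrow> ('v \<Rightarrow> nat) \<Rightarrow> ('v \<Rightarrow> 'a) \<Rightarrow> 'a" where
  "taylor_coeff p \<alpha> a =
     (\<Sum>\<delta>\<in>exp_box p. of_nat (multi_choose (\<alpha> + \<delta>) \<alpha>) * Poly_Mapping.lookup p (\<alpha> + \<delta>) * mon_eval a \<delta>)"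

text \<open>The derivative of \<open>taylor_coeff p \<alpha>\<close> at \<open>a\<close> in direction \<open>w\<close>, since
  \<open>\<partial>\<^sub>iP\<^sub>\<alpha> = (\<alpha>\<^sub>i + 1) P\<^bsub>\<alpha>+e\<^sub>i\<^esub>\<close>.\<close>
definition taylor_deriv ::
  "('v::finite, 'a::comm_ring_1) mpoly \<Rightarrow> ('v \<Rightarrow> nat) \<Rightarrow> ('v \<Rightarrow> 'a) \<Rightarrow> ('v \<Rightarrow> 'a) \<Rightarrow> 'a" where
  "taylor_deriv p \<alpha> a w =
     (\<Sum>\<delta>\<in>{\<delta> \<in> exp_box p. mon_deg \<delta> = 1}.
        of_nat (multi_choose (\<alpha> + \<delta>) \<alpha>) * taylor_coeff p (\<alpha> + \<delta>) a * mon_eval w \<delta>)"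

lemma taylor_coeff_at_0: "taylor_coeff p \<alpha> 0 = Poly_Mapping.lookup p \<alpha>"
  by (simp add: taylor_coeff_def mon_eval_at_0 if_distrib[of "\<lambda>x. _ * x"] cong: if_cong)

lemma mp_eval_shift_coeff: "mp_eval (shift_coeff p q \<alpha>) v = taylor_coeff p \<alpha> v - Poly_Mapping.lookup q \<alpha>"
proof -
  have "mp_eval (shift_coeff p q \<alpha>) v
      = (\<Sum>\<delta>\<in>exp_box p. Poly_Mapping.lookup (shift_coeff p q \<alpha>) \<delta> * mon_eval v \<delta>)"
    by (rule mp_eval_superset[OF finite_exp_box keys_shift_coeff])
  then show ?thesis
    by (simp add: lookup_shift_coeff taylor_coeff_def left_diff_distrib sum_subtractf
        if_distrib[of "\<lambda>x. x * _"] cong: if_cong)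
qed

lemma mp_eval_hom_comp_1_shift_coeff:
  "mp_eval (hom_comp 1 (shift_coeff p q \<alpha>)) w = taylor_deriv p \<alpha> 0 w"
proof -
  have "mp_eval (hom_comp 1 (shift_coeff p q \<alpha>)) w
      = (\<Sum>\<delta>\<in>{\<delta> \<in> exp_box p. mon_deg \<delta> = 1}.
           Poly_Mapping.lookup (hom_comp 1 (shift_coeff p q \<alpha>)) \<delta> * mon_eval w \<delta>)"
    using keys_hom_comp keys_shift_coeff by (intro mp_eval_superset) fastforce+
  also have "\<dots> = taylor_deriv p \<alpha> 0 w"
    unfolding taylor_deriv_def taylor_coeff_at_0
    by (intro sum.cong refl) (auto simp: lookup_hom_comp lookup_shift_coeff mon_deg_0_iff[symmetric])
  finally show ?thesis .
qed

lemma sum_le_splittings: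
  fixes D :: "('v \<Rightarrow> nat) set" and f :: "('v \<Rightarrow> nat) \<Rightarrow> ('v \<Rightarrow> nat) \<Rightarrow> 'a::comm_monoid_add"
  assumes fin: "finite D"
    and down: "\<And>\<delta> \<gamma>. \<delta> \<in> D \<Longrightarrow> \<gamma> \<le> \<delta> \<Longrightarrow> \<gamma> \<in> D"
    and vanish: "\<And>\<gamma> \<eta>. \<gamma> + \<eta> \<notin> D \<Longrightarrow> f \<gamma> \<eta> = 0"
  shows "(\<Sum>\<delta>\<in>D. \<Sum>\<gamma>\<in>{\<gamma> \<in> D. \<gamma> \<le> \<delta>}. f \<gamma> (\<delta> - \<gamma>)) = (\<Sum>\<gamma>\<in>D. \<Sum>\<eta>\<in>D. f \<gamma> \<eta>)"
proof -
  have "(\<Sum>\<delta>\<in>{\<delta> \<in> D. \<gamma> \<le> \<delta>}. f \<gamma> (\<delta> - \<gamma>)) = (\<Sum>\<eta>\<in>D. f \<gamma> \<eta>)" if "\<gamma> \<in> D" for \<gamma>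
  proof -
    have "(\<Sum>\<delta>\<in>{\<delta> \<in> D. \<gamma> \<le> \<delta>}. f \<gamma> (\<delta> - \<gamma>)) = (\<Sum>\<eta>\<in>{\<eta> \<in> D. \<gamma> + \<eta> \<in> D}. f \<gamma> \<eta>)"
      by (rule sum.reindex_bij_witness[where i = "\<lambda>\<eta>. \<gamma> + \<eta>" and j = "\<lambda>\<delta>. \<delta> - \<gamma>"])
        (auto simp: le_fun_def fun_eq_iff intro: down)
    also have "\<dots> = (\<Sum>\<eta>\<in>D. f \<gamma> \<eta>)"
      using fin vanish by (intro sum.mono_neutral_left) auto
    finally show ?thesis .
  qed
  moreover have "(\<Sum>\<delta>\<in>D. \<Sum>\<gamma>\<in>{\<gamma> \<in> D. \<gamma> \<le> \<delta>}. f \<gamma> (\<delta> - \<gamma>))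
      = (\<Sum>\<gamma>\<in>D. \<Sum>\<delta>\<in>{\<delta> \<in> D. \<gamma> \<le> \<delta>}. f \<gamma> (\<delta> - \<gamma>))"
    by (rule sum.swap_restrict[OF fin fin])
  ultimately show ?thesis
    by simp
qed

lemma mon_eval_add:
  "mon_eval (a + b) \<delta>
     = (\<Sum>\<gamma>\<in>{\<gamma>. \<gamma> \<le> \<delta>}. of_nat (multi_choose \<delta> \<gamma>) * mon_eval b \<gamma> * mon_eval a (\<delta> - \<gamma>))"
  for a b :: "'v::finite \<Rightarrow> 'a::comm_semiring_1"
proof -
  have "mon_eval (a + b) \<delta> = (\<Prod>i\<in>UNIV. \<Sum>k\<le>\<delta> i. of_nat (\<delta> i choose k) * b i ^ k * a i ^ (\<delta> i - k))"
    unfolding mon_eval_def by (simp add: add.commute[of "a _"] binomial_ring)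
  also have "\<dots> = (\<Sum>\<gamma>\<in>PiE UNIV (\<lambda>i. {..\<delta> i}).
      \<Prod>i\<in>UNIV. of_nat (\<delta> i choose \<gamma> i) * b i ^ \<gamma> i * a i ^ (\<delta> i - \<gamma> i))"
    by (rule prod_sum_PiE) auto
  finally show ?thesis
    by (simp add: PiE_atMost_eq multi_choose_def mon_eval_def prod.distrib of_nat_prod)
qed

lemma taylor_coeff_add:
  "taylor_coeff p \<alpha> (a + b)
     = (\<Sum>\<gamma>\<in>exp_box p. of_nat (multi_choose (\<alpha> + \<gamma>) \<alpha>) * taylor_coeff p (\<alpha> + \<gamma>) a * mon_eval b \<gamma>)"
proof -
  let ?B = "exp_box p"
  define f where "f \<gamma> \<eta> = of_nat (multi_choose (\<alpha> + \<gamma>) \<alpha> * multi_choose (\<alpha> + \<gamma> + \<eta>) (\<alpha> + \<gamma>))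
      * Poly_Mapping.lookup p (\<alpha> + \<gamma> + \<eta>) * mon_eval a \<eta> * mon_eval b \<gamma>" for \<gamma> \<eta>
  have summand: "of_nat (multi_choose (\<alpha> + \<delta>) \<alpha>) * Poly_Mapping.lookup p (\<alpha> + \<delta>)
      * (of_nat (multi_choose \<delta> \<gamma>) * mon_eval b \<gamma> * mon_eval a (\<delta> - \<gamma>)) = f \<gamma> (\<delta> - \<gamma>)"
    if "\<gamma> \<le> \<delta>" for \<gamma> \<delta>
  proof -
    have "\<alpha> + \<gamma> + (\<delta> - \<gamma>) = \<alpha> + \<delta>"
      using that by (simp add: le_fun_def fun_eq_iff)
    then have "f \<gamma> (\<delta> - \<gamma>) = of_nat (multi_choose (\<alpha> + \<delta>) \<alpha> * multi_choose \<delta> \<gamma>)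
        * Poly_Mapping.lookup p (\<alpha> + \<delta>) * mon_eval a (\<delta> - \<gamma>) * mon_eval b \<gamma>"
      unfolding f_def multi_choose_mult[OF that] by simp
    then show ?thesis
      by (simp add: ac_simps)
  qed
  have "taylor_coeff p \<alpha> (a + b) = (\<Sum>\<delta>\<in>?B. \<Sum>\<gamma>\<in>{\<gamma> \<in> ?B. \<gamma> \<le> \<delta>}. f \<gamma> (\<delta> - \<gamma>))"
    unfolding taylor_coeff_def mon_eval_add sum_distrib_left
  proof (intro sum.cong refl)
    fix \<delta> \<gamma> assume "\<delta> \<in> ?B"
    then show "{\<gamma>. \<gamma> \<le> \<delta>} = {\<gamma> \<in> ?B. \<gamma> \<le> \<delta>}"
      by (auto intro: exp_box_down_closed)
  qed (simp add: summand)
  also have "\<dots> = (\<Sum>\<gamma>\<in>?B. \<Sum>\<eta>\<in>?B. f \<gamma> \<eta>)"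
  proof (rule sum_le_splittings)
    fix \<gamma> \<eta> assume "\<gamma> + \<eta> \<notin> ?B"
    then show "f \<gamma> \<eta> = 0"
      using lookup_outside_exp_box[of "\<gamma> + \<eta>" p \<alpha>] by (simp add: f_def add.assoc)
  qed (auto intro: exp_box_down_closed)
  also have "\<dots> = (\<Sum>\<gamma>\<in>?B. of_nat (multi_choose (\<alpha> + \<gamma>) \<alpha>) * taylor_coeff p (\<alpha> + \<gamma>) a * mon_eval b \<gamma>)"
    by (simp add: f_def taylor_coeff_def sum_distrib_left sum_distrib_right ac_simps)
  finally show ?thesis .
qed

lemma taylor_deriv_expansion:
  "taylor_deriv p \<alpha> a w
     = (\<Sum>\<eta>\<in>exp_box p. of_nat (multi_choose (\<alpha> + \<eta>) \<alpha>) * mon_eval a \<eta> * taylor_deriv p (\<alpha> + \<eta>) 0 w)"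
proof -
  let ?B = "exp_box p" and ?B1 = "{\<delta> \<in> exp_box p. mon_deg \<delta> = 1}"
  have "taylor_deriv p \<alpha> a w = (\<Sum>\<delta>\<in>?B1. \<Sum>\<eta>\<in>?B.
      of_nat (multi_choose (\<alpha> + \<delta>) \<alpha> * multi_choose (\<alpha> + \<delta> + \<eta>) (\<alpha> + \<delta>))
      * Poly_Mapping.lookup p (\<alpha> + \<delta> + \<eta>) * mon_eval a \<eta> * mon_eval w \<delta>)"
    by (simp add: taylor_deriv_def taylor_coeff_def sum_distrib_left sum_distrib_right ac_simps)
  also have "\<dots> = (\<Sum>\<eta>\<in>?B. \<Sum>\<delta>\<in>?B1.
      of_nat (multi_choose (\<alpha> + \<eta>) \<alpha> * multi_choose (\<alpha> + \<eta> + \<delta>) (\<alpha> + \<eta>))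
      * Poly_Mapping.lookup p (\<alpha> + \<eta> + \<delta>) * mon_eval a \<eta> * mon_eval w \<delta>)"
  proof (subst sum.swap, intro sum.cong refl)
    fix \<eta> \<delta>
    show "of_nat (multi_choose (\<alpha> + \<delta>) \<alpha> * multi_choose (\<alpha> + \<delta> + \<eta>) (\<alpha> + \<delta>))
        * Poly_Mapping.lookup p (\<alpha> + \<delta> + \<eta>) * mon_eval a \<eta> * mon_eval w \<delta>
      = of_nat (multi_choose (\<alpha> + \<eta>) \<alpha> * multi_choose (\<alpha> + \<eta> + \<delta>) (\<alpha> + \<eta>))
        * Poly_Mapping.lookup p (\<alpha> + \<eta> + \<delta>) * mon_eval a \<eta> * mon_eval w \<delta>"
      unfolding multi_choose_swap[of \<alpha> \<delta> \<eta>] by (simp only: add.assoc add.commute[of \<delta> \<eta>])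
  qed
  also have "\<dots> = (\<Sum>\<eta>\<in>?B. of_nat (multi_choose (\<alpha> + \<eta>) \<alpha>) * mon_eval a \<eta> * taylor_deriv p (\<alpha> + \<eta>) 0 w)"
    by (simp add: taylor_deriv_def taylor_coeff_at_0 sum_distrib_left ac_simps)
  finally show ?thesis .
qed

lemma less_add_fun_iff: "(\<alpha> :: 'v \<Rightarrow> nat) < \<alpha> + \<eta> \<longleftrightarrow> \<eta> \<noteq> 0"
proof -
  have "\<alpha> \<le> \<alpha> + \<eta>" and "\<alpha> + \<eta> \<le> \<alpha> \<longleftrightarrow> \<eta> = 0"
    by (auto simp: le_fun_def fun_eq_iff)
  then show ?thesis
    by (simp add: less_le_not_le)
qed

lemma taylor_deriv_eq_at_0:
  assumes "\<And>\<beta>. \<alpha> < \<beta> \<Longrightarrow> taylor_deriv p \<beta> 0 w = 0"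
  shows "taylor_deriv p \<alpha> a w = taylor_deriv p \<alpha> 0 w"
proof -
  have "taylor_deriv p \<alpha> a w
      = (\<Sum>\<eta>\<in>exp_box p. if \<eta> = 0 then taylor_deriv p \<alpha> 0 w else 0)"
    unfolding taylor_deriv_expansion[of p \<alpha> a]
    by (intro sum.cong refl) (simp add: assms less_add_fun_iff)
  then show ?thesis
    by simp
qed

section \<open>Linearity along lines\<close>

lemma additive_poly_is_linear:
  fixes Q :: "'a::field_char_0 poly"
  assumes additive: "\<And>u. poly Q (u + u) = poly Q u + poly Q u"
  shows "poly Q u = coeff Q 1 * u"
proof -
  have "pcompose Q [:0, 2:] = smult 2 Q"
  proof (rule poly_ext)
    fix u
    have "poly (pcompose Q [:0, 2:]) u = poly Q (2 * u)"
      by (simp add: poly_pcompose mult.commute)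
    also have "\<dots> = 2 * poly Q u"
      using additive[of u] by (simp only: mult_2)
    finally show "poly (pcompose Q [:0, 2:]) u = poly (smult 2 Q) u"
      by simp
  qed
  then have "2 ^ k * coeff Q k = 2 * coeff Q k" for k
    by (metis coeff_pcompose_linear coeff_smult)
  moreover have "(2::'a) ^ k \<noteq> 2" if "k \<noteq> 1" for k
  proof -
    have "(2::nat) ^ k \<noteq> 2"
      using that power_inject_exp[of 2 k 1] by simp
    then show ?thesis
      using of_nat_eq_iff[of "2 ^ k" 2, where 'a='a] by simp
  qed
  ultimately have "coeff Q k = 0" if "k \<noteq> 1" for k
    using that by (metis mult_cancel_right)
  then have "Q = [:0, coeff Q 1:]"
    by (intro poly_eqI) (simp add: coeff_pCons split: nat.split)
  then have "poly Q u = poly [:0, coeff Q 1:] u"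
    by (rule arg_cong)
  then show ?thesis
    by simp
qed

lemma taylor_coeff_affine_on_line:
  fixes p :: "('v::finite, 'a::field_char_0) mpoly"
  assumes const: "\<And>\<beta> t. \<alpha> < \<beta> \<Longrightarrow> taylor_coeff p \<beta> (s + (\<lambda>i. t * w i)) = taylor_coeff p \<beta> s"
  shows "taylor_coeff p \<alpha> (s + w) = taylor_coeff p \<alpha> s + taylor_deriv p \<alpha> s w"
proof -
  let ?B = "exp_box p"
  define h where "h t = taylor_coeff p \<alpha> (s + (\<lambda>i. t * w i))" for t
  define c where "c \<gamma> = of_nat (multi_choose (\<alpha> + \<gamma>) \<alpha>) * taylor_coeff p (\<alpha> + \<gamma>) s * mon_eval w \<gamma>" for \<gamma>
  define Q where "Q = (\<Sum>\<gamma>\<in>?B - {0}. monom (c \<gamma>) (mon_deg \<gamma>))"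
  \<comment> \<open>Taylor expansion at s + t w: the higher coefficients are constant along the line,
    so the increment of h does not depend on t.\<close>
  have shift: "h (t + u) = h t + poly Q u" for t u
  proof -
    have "s + (\<lambda>i. (t + u) * w i) = (s + (\<lambda>i. t * w i)) + (\<lambda>i. u * w i)"
      by (simp add: fun_eq_iff algebra_simps)
    then have "h (t + u) = taylor_coeff p \<alpha> ((s + (\<lambda>i. t * w i)) + (\<lambda>i. u * w i))"
      by (simp only: h_def)
    also have "\<dots> = (\<Sum>\<gamma>\<in>?B. of_nat (multi_choose (\<alpha> + \<gamma>) \<alpha>)
        * taylor_coeff p (\<alpha> + \<gamma>) (s + (\<lambda>i. t * w i)) * mon_eval (\<lambda>i. u * w i) \<gamma>)"
      by (rule taylor_coeff_add)
    also have "\<dots> = h t + (\<Sum>\<gamma>\<in>?B - {0}. c \<gamma> * u ^ mon_deg \<gamma>)"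
      unfolding sum.remove[OF finite_exp_box zero_in_exp_box] h_def c_def
      by (simp add: const less_add_fun_iff mon_eval_scale, simp add: ac_simps)
    also have "(\<Sum>\<gamma>\<in>?B - {0}. c \<gamma> * u ^ mon_deg \<gamma>) = poly Q u"
      by (simp add: Q_def poly_sum poly_monom)
    finally show ?thesis .
  qed
  have "poly Q (u + u) = poly Q u + poly Q u" for u
    using shift[of 0 "u + u"] shift[of u u] shift[of 0 u] by simp
  then have "poly Q 1 = coeff Q 1"
    using additive_poly_is_linear[of Q 1] by simp
  also have "coeff Q 1 = taylor_deriv p \<alpha> s w"
    unfolding Q_def coeff_sum coeff_monom taylor_deriv_def c_def
    by (intro sum.mono_neutral_cong_right) (auto simp: mon_deg_0_iff[symmetric])
  finally show ?thesis
    using shift[of 0 1] by (simp add: h_def flip: zero_fun_def)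
qed

lemma shift_coeff_affine_on_line:
  fixes p q :: "('v::finite, 'a::field_char_0) mpoly"
  assumes line: "\<And>\<beta> t. \<alpha> < \<beta> \<Longrightarrow> mp_eval (shift_coeff p q \<beta>) (s + (\<lambda>i. t * w i)) = 0"
    and lin: "\<And>\<beta>. \<alpha> < \<beta> \<Longrightarrow> mp_eval (hom_comp 1 (shift_coeff p q \<beta>)) w = 0"
  shows "mp_eval (shift_coeff p q \<alpha>) (s + w)
    = mp_eval (shift_coeff p q \<alpha>) s + mp_eval (hom_comp 1 (shift_coeff p q \<alpha>)) w"
proof -
  have "taylor_coeff p \<beta> (s + (\<lambda>i. t * w i)) = taylor_coeff p \<beta> s" if "\<alpha> < \<beta>" for \<beta> t
    using line[OF that, of t] line[OF that, of 0] by (simp add: mp_eval_shift_coeff flip: zero_fun_def)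
  then have "taylor_coeff p \<alpha> (s + w) = taylor_coeff p \<alpha> s + taylor_deriv p \<alpha> s w"
    by (rule taylor_coeff_affine_on_line)
  moreover have "taylor_deriv p \<alpha> s w = taylor_deriv p \<alpha> 0 w"
    using lin by (intro taylor_deriv_eq_at_0) (metis mp_eval_hom_comp_1_shift_coeff)
  ultimately show ?thesis
    by (simp add: mp_eval_shift_coeff mp_eval_hom_comp_1_shift_coeff del: One_nat_def)
qed

lemma shift_coeff_affine_on_zero_set:
  fixes p q :: "('v::finite, 'a::field_char_0) mpoly"
  assumes zero_set_eq: "\<And>x. x \<in> zero_set (shift_coeff p q ` U)
      \<longleftrightarrow> (\<forall>\<beta>\<in>U. mp_eval (hom_comp 1 (shift_coeff p q \<beta>)) (x - s) = 0)"
    and above: "\<And>\<beta>. \<alpha> < \<beta> \<Longrightarrow> shift_coeff p q \<beta> \<noteq> 0 \<Longrightarrow> \<beta> \<in> U"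
    and v: "v \<in> zero_set (shift_coeff p q ` U)"
  shows "mp_eval (shift_coeff p q \<alpha>) v
    = mp_eval (shift_coeff p q \<alpha>) s + mp_eval (hom_comp 1 (shift_coeff p q \<alpha>)) (v - s)"
proof -
  define w where "w = v - s"
  have w: "\<forall>\<beta>\<in>U. mp_eval (hom_comp 1 (shift_coeff p q \<beta>)) w = 0"
    using v zero_set_eq w_def by blast
  have lin: "mp_eval (hom_comp 1 (shift_coeff p q \<beta>)) w = 0" if "\<alpha> < \<beta>" for \<beta>
    using above[OF that] w by (cases "shift_coeff p q \<beta> = 0") (auto simp: hom_comp_def)
  have "s + (\<lambda>i. t * w i) \<in> zero_set (shift_coeff p q ` U)" for t
  proof -
    have "mp_eval (hom_comp 1 (shift_coeff p q \<beta>)) (s + (\<lambda>i. t * w i) - s) = 0" if "\<beta> \<in> U" for \<beta>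
      using w that mp_eval_hom_comp_scale[of 1 _ t w] by (simp add: fun_diff_def)
    then show ?thesis
      by (simp add: zero_set_eq)
  qed
  then have line: "mp_eval (shift_coeff p q \<beta>) (s + (\<lambda>i. t * w i)) = 0" if "\<alpha> < \<beta>" for \<beta> t
    using above[OF that] by (cases "shift_coeff p q \<beta> = 0") (auto simp: mem_zero_set_image)
  have "s + w = v"
    by (simp add: w_def)
  then show ?thesis
    using shift_coeff_affine_on_line[OF line lin] by (simp add: w_def)
qed

lemma zero_set_upto_eq_linearized:
  fixes p q :: "('v::finite, 'a::field_char_0) mpoly"
  assumes adm: "admissible_cover p q m C" and "l \<le> m"
    and "s \<in> zero_set (shift_coeff p q ` (\<Union>i\<in>{0..<l}. C i))"
  shows "zero_set (shift_coeff p q ` (\<Union>i\<in>{0..l}. C i)) =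
    {v. \<forall>\<alpha>\<in>(\<Union>i\<in>{0..l}. C i).
       mp_eval (shift_coeff p q \<alpha>) s + mp_eval (hom_comp 1 (shift_coeff p q \<alpha>)) (v - s) = 0}"
  using assms(2,3)
proof (induction l)
  case 0
  have "mp_eval (shift_coeff p q \<alpha>) v = 0
      \<longleftrightarrow> mp_eval (shift_coeff p q \<alpha>) s + mp_eval (hom_comp 1 (shift_coeff p q \<alpha>)) (v - s) = 0"
    if "\<alpha> \<in> C 0" for \<alpha> v
  proof -
    have "mp_deg (shift_coeff p q \<alpha>) \<le> 1"
      using adm that by (simp add: admissible_cover_def)
    then show ?thesis
      by (subst mp_eval_deg_le_1[of _ v s]) simp_all
  qed
  then show ?case
    by (auto simp: mem_zero_set_image fun_diff_def)
next
  case (Suc k)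
  let ?c = "shift_coeff p q" and ?U = "\<Union>i\<in>{0..k}. C i"
  have U_Suc: "(\<Union>i\<in>{0..Suc k}. C i) = ?U \<union> C (Suc k)" and U_less: "(\<Union>i\<in>{0..<Suc k}. C i) = ?U"
    by (auto simp: le_Suc_eq atLeastLessThanSuc_atLeastAtMost)
  have s: "\<forall>\<beta>\<in>?U. mp_eval (?c \<beta>) s = 0"
    using Suc.prems(2) by (simp add: U_less mem_zero_set_image)
  have "s \<in> zero_set (?c ` (\<Union>i\<in>{0..<k}. C i))"
    using s by (auto simp: mem_zero_set_image)
  then have IH: "zero_set (?c ` ?U)
      = {v. \<forall>\<alpha>\<in>?U. mp_eval (?c \<alpha>) s + mp_eval (hom_comp 1 (?c \<alpha>)) (v - s) = 0}"
    using Suc.IH Suc.prems(1) Suc_leD by blast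
  have U: "x \<in> zero_set (?c ` ?U) \<longleftrightarrow>
      (\<forall>\<beta>\<in>?U. mp_eval (?c \<beta>) s + mp_eval (hom_comp 1 (?c \<beta>)) (x - s) = 0)" for x
    unfolding IH mem_Collect_eq ..
  have zero_set_U: "x \<in> zero_set (?c ` ?U) \<longleftrightarrow> (\<forall>\<beta>\<in>?U. mp_eval (hom_comp 1 (?c \<beta>)) (x - s) = 0)" for x
    unfolding U using s by simp
  have above: "\<beta> \<in> ?U" if "\<alpha> \<in> C (Suc k)" "\<alpha> < \<beta>" "?c \<beta> \<noteq> 0" for \<alpha> \<beta>
    using adm Suc.prems(1) that unfolding admissible_cover_def U_less[symmetric] by auto
  have affine: "mp_eval (?c \<alpha>) v = 0 \<longleftrightarrow> mp_eval (?c \<alpha>) s + mp_eval (hom_comp 1 (?c \<alpha>)) (v - s) = 0"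
    if "\<alpha> \<in> C (Suc k)" "v \<in> zero_set (?c ` ?U)" for \<alpha> v
    using shift_coeff_affine_on_zero_set[OF zero_set_U above[OF that(1)] that(2)] by simp
  show ?case
  proof (rule set_eqI)
    fix v
    have "v \<in> zero_set (?c ` (?U \<union> C (Suc k)))
        \<longleftrightarrow> v \<in> zero_set (?c ` ?U) \<and> (\<forall>\<alpha>\<in>C (Suc k). mp_eval (?c \<alpha>) v = 0)"
      by (simp only: image_Un zero_set_union Int_iff mem_zero_set_image[of v _ "C (Suc k)"])
    also have "\<dots> \<longleftrightarrow> v \<in> zero_set (?c ` ?U)
        \<and> (\<forall>\<alpha>\<in>C (Suc k). mp_eval (?c \<alpha>) s + mp_eval (hom_comp 1 (?c \<alpha>)) (v - s) = 0)"
      using affine by blast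
    also have "\<dots> \<longleftrightarrow>
        (\<forall>\<alpha>\<in>?U \<union> C (Suc k). mp_eval (?c \<alpha>) s + mp_eval (hom_comp 1 (?c \<alpha>)) (v - s) = 0)"
      using U by blast
    finally show "v \<in> zero_set (?c ` (\<Union>i\<in>{0..Suc k}. C i)) \<longleftrightarrow> v \<in> {v. \<forall>\<alpha>\<in>(\<Union>i\<in>{0..Suc k}. C i).
        mp_eval (?c \<alpha>) s + mp_eval (hom_comp 1 (?c \<alpha>)) (v - s) = 0}"
      unfolding U_Suc mem_Collect_eq .
  qed
qed

theorem theorem1p1:
  fixes p q :: "('v::finite, 'a::field_char_0) mpoly"
    and m :: nat and C :: "nat \<Rightarrow> ('v \<Rightarrow> nat) set"
  assumes "admissible_cover p q m C"
  shows "\<forall>l\<in>{0..m}.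
           zero_set (shift_coeff p q ` (\<Union>i\<in>{0..<l}. C i)) = {} \<or>
           (\<forall>s\<in>zero_set (shift_coeff p q ` (\<Union>i\<in>{0..<l}. C i)).
              zero_set (shift_coeff p q ` (\<Union>i\<in>{0..l}. C i)) =
              zero_set (\<Union>i\<in>{0..l}. linearize s ` (shift_coeff p q ` C i)))"
proof (intro ballI disjI2 set_eqI)
  fix l s v
  assume "l \<in> {0..m}" and s: "s \<in> zero_set (shift_coeff p q ` (\<Union>i\<in>{0..<l}. C i))"
  then have "l \<le> m"
    by simp
  have linearized: "(\<Union>i\<in>{0..l}. linearize s ` shift_coeff p q ` C i)
      = (\<lambda>\<alpha>. linearize s (shift_coeff p q \<alpha>)) ` (\<Union>i\<in>{0..l}. C i)"
    by auto
  show "v \<in> zero_set (shift_coeff p q ` (\<Union>i\<in>{0..l}. C i))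
      \<longleftrightarrow> v \<in> zero_set (\<Union>i\<in>{0..l}. linearize s ` shift_coeff p q ` C i)"
    unfolding zero_set_upto_eq_linearized[OF assms \<open>l \<le> m\<close> s] linearized mem_Collect_eq mem_zero_set_image
      mp_eval_linearize ..
qed

end
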